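(* Let $\langle X,<\rangle$ be an infinite linear ordering and $r$ a positive integer. Then there is $Y\subseteq X$ with $|Y|=|X|$ such that for any $y_1<y_2$ in $Y$ there are elements $x^{(k)}_1,\dots,x^{(k)}_r\in X$ for $k=1,2,3$ (at least $r$ of each) with \[x^{(1)}_1,\dots,x^{(1)}_r<y_1<x^{(2)}_1,\dots,x^{(2)}_r<y_2<x^{(3)}_1,\dots,x^{(3)}_r.\] *)

theory Defs
  imports Main "HOL-Library.Equipollence"
begin

end

theory Submission
  imports Defs
begin

text \<open>
  Call a point good if it has at least \<open>r\<close> predecessors and at least \<open>r\<close> successors, and call
  a set of good points separated if any two of its points have at least \<open>r\<close> points strictly
  between them. By Zorn's lemma there is a maximal separated set \<open>Y\<close>. Only finitely many points
  are not good, and a point \<open>y\<close> is "in conflict" (fewer than \<open>r\<close> points in between) with only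
  finitely many points on either side, because the corresponding intervals are strictly nested
  and so have pairwise different cardinalities below \<open>r\<close>. By maximality every point of \<open>X\<close> is
  bad, in \<open>Y\<close>, or in conflict with some point of \<open>Y\<close>; hence \<open>X\<close> is a union of finite sets
  indexed by \<open>Y\<close>, which forces \<open>|X| \<le> |Y|\<close> since \<open>X\<close> is infinite.
\<close>

definition large :: "nat \<Rightarrow> 'a set \<Rightarrow> bool" where
  "large r D \<longleftrightarrow> (\<exists>B\<subseteq>D. finite B \<and> card B = r)"

lemma not_large_iff: "\<not> large r D \<longleftrightarrow> finite D \<and> card D < r"
proof (cases "finite D")
  case True
  then show ?thesis
    unfolding large_def
    by (metis card_mono not_le obtain_subset_with_card_n)
next
  case False
  then show ?thesis
    unfolding large_def by (meson infinite_arbitrarily_large)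
qed

text \<open>The map \<open>x \<mapsto> card (f x)\<close> is injective on \<open>S\<close> with values below \<open>r\<close>.\<close>

lemma finite_if_nested_not_large:
  assumes not_large: "\<And>x. x \<in> S \<Longrightarrow> \<not> large r (f x)"
    and nested: "\<And>x y. x \<in> S \<Longrightarrow> y \<in> S \<Longrightarrow> x \<noteq> y \<Longrightarrow> f x \<subset> f y \<or> f y \<subset> f x"
  shows "finite S"
proof -
  have fin: "finite (f x)" and card_less: "card (f x) < r" if "x \<in> S" for x
    using not_large[OF that] by (auto simp: not_large_iff)
  have "inj_on (\<lambda>x. card (f x)) S"
  proof (rule inj_onI, rule ccontr)
    fix x y
    assume "x \<in> S" "y \<in> S" "card (f x) = card (f y)" "x \<noteq> y"
    then show False
      using nested fin psubset_card_mono by (metis less_irrefl)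
  qed
  moreover have "(\<lambda>x. card (f x)) ` S \<subseteq> {..<r}"
    using card_less by auto
  ultimately show ?thesis
    by (meson finite_imageD finite_lessThan finite_subset)
qed

lemma lepoll_if_covered_by_finite:
  assumes "infinite X"
    and finite_pieces: "\<And>y. y \<in> Y \<Longrightarrow> finite (N y)"
    and cover: "X \<subseteq> (\<Union>y\<in>Y. N y)"
  shows "X \<lesssim> Y"
proof -
  have "infinite Y"
    using assms by (meson finite_UN_I finite_subset)
  have "(card_of (N y), card_of Y) \<in> ordLeq" if "y \<in> Y" for y
    using finite_lepoll_infinite[OF \<open>infinite Y\<close> finite_pieces[OF that]]
    unfolding lepoll_def card_of_ordLeq .
  then have "(card_of (\<Union>y\<in>Y. N y), card_of Y) \<in> ordLeq"
    using card_of_UNION_ordLeq_infinite[OF \<open>infinite Y\<close> card_of_mono1[of Y Y]] by blast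
  then have "(\<Union>y\<in>Y. N y) \<lesssim> Y"
    unfolding lepoll_def card_of_ordLeq .
  then show ?thesis
    using cover by (meson lepoll_trans subset_imp_lepoll)
qed

locale linearly_ordered_set =
  fixes X :: "'a set" and R :: "'a rel"
  assumes linear: "linear_order_on X R"
begin

abbreviation less :: "'a \<Rightarrow> 'a \<Rightarrow> bool" (infix "\<sqsubset>" 50) where
  "x \<sqsubset> y \<equiv> (x, y) \<in> R - Id"

lemma relation_subset: "R \<subseteq> X \<times> X"
  using linear unfolding linear_order_on_def partial_order_on_def preorder_on_def refl_on_def
  by auto

lemma less_in_carrier: "x \<sqsubset> y \<Longrightarrow> x \<in> X \<and> y \<in> X"
  using relation_subset by auto

lemma less_trans:
  assumes "x \<sqsubset> y" "y \<sqsubset> z"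
  shows "x \<sqsubset> z"
proof -
  have "trans R" "antisym R"
    using linear unfolding linear_order_on_def partial_order_on_def preorder_on_def by auto
  then show ?thesis
    using assms unfolding trans_def antisym_def by blast
qed

lemma less_linear: "x \<in> X \<Longrightarrow> y \<in> X \<Longrightarrow> x \<noteq> y \<Longrightarrow> x \<sqsubset> y \<or> y \<sqsubset> x"
  using linear unfolding linear_order_on_def total_on_def by auto

lemma finite_if_monotone_not_large:
  assumes "S \<subseteq> X"
    and "\<And>x. x \<in> S \<Longrightarrow> \<not> large r (f x)"
    and "\<And>x y. x \<in> S \<Longrightarrow> y \<in> S \<Longrightarrow> x \<sqsubset> y \<Longrightarrow> f x \<subset> f y \<or> f y \<subset> f x"
  shows "finite S"
  using assms by (intro finite_if_nested_not_large[where f = f and r = r])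
    (blast dest: less_linear)+

definition lower :: "'a \<Rightarrow> 'a set" where
  "lower x = {z. z \<sqsubset> x}"

definition upper :: "'a \<Rightarrow> 'a set" where
  "upper x = {z. x \<sqsubset> z}"

definition between :: "'a \<Rightarrow> 'a \<Rightarrow> 'a set" where
  "between a b = {z. a \<sqsubset> z \<and> z \<sqsubset> b}"

lemma lower_subset: "lower x \<subseteq> X"
  and upper_subset: "upper x \<subseteq> X"
  and between_subset: "between a b \<subseteq> X"
  unfolding lower_def upper_def between_def using less_in_carrier by auto

lemma lower_psubset:
  assumes "x \<sqsubset> y"
  shows "lower x \<subset> lower y"
proof
  show "lower x \<subseteq> lower y"
    using assms less_trans unfolding lower_def by blast
  show "lower x \<noteq> lower y"
    using assms unfolding lower_def by blast
qed

lemma upper_psubset: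
  assumes "x \<sqsubset> y"
  shows "upper y \<subset> upper x"
proof
  show "upper y \<subseteq> upper x"
    using assms less_trans unfolding upper_def by blast
  show "upper y \<noteq> upper x"
    using assms unfolding upper_def by blast
qed

lemma between_psubset_right:
  assumes "a \<sqsubset> x" "x \<sqsubset> y"
  shows "between a x \<subset> between a y"
proof
  show "between a x \<subseteq> between a y"
    using assms less_trans unfolding between_def by blast
  show "between a x \<noteq> between a y"
    using assms unfolding between_def by blast
qed

lemma between_psubset_left:
  assumes "x \<sqsubset> y" "y \<sqsubset> b"
  shows "between y b \<subset> between x b"
proof
  show "between y b \<subseteq> between x b"
    using assms less_trans unfolding between_def by blast
  show "between y b \<noteq> between x b"
    using assms unfolding between_def by blast
qed

definition good :: "nat \<Rightarrow> 'a set" where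
  "good r = {x \<in> X. large r (lower x) \<and> large r (upper x)}"

definition separated :: "nat \<Rightarrow> 'a set \<Rightarrow> bool" where
  "separated r Y \<longleftrightarrow> Y \<subseteq> good r \<and> (\<forall>a\<in>Y. \<forall>b\<in>Y. a \<sqsubset> b \<longrightarrow> large r (between a b))"

definition conflicts :: "nat \<Rightarrow> 'a \<Rightarrow> 'a set" where
  "conflicts r y = {x. y \<sqsubset> x \<and> \<not> large r (between y x)} \<union> {x. x \<sqsubset> y \<and> \<not> large r (between x y)}"

lemma finite_not_good: "finite (X - good r)"
proof -
  have "finite {x \<in> X. \<not> large r (lower x)}"
    by (rule finite_if_monotone_not_large[where f = lower and r = r]) (auto simp: lower_psubset)
  moreover have "finite {x \<in> X. \<not> large r (upper x)}"
    by (rule finite_if_monotone_not_large[where f = upper and r = r]) (auto simp: upper_psubset)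
  ultimately show ?thesis
    by (rule finite_subset[rotated, OF finite_UnI]) (auto simp: good_def)
qed

lemma finite_conflicts: "finite (conflicts r y)"
proof -
  have "finite {x. y \<sqsubset> x \<and> \<not> large r (between y x)}"
    by (rule finite_if_monotone_not_large[where f = "between y" and r = r])
      (auto simp: between_psubset_right dest: subsetD[OF relation_subset])
  moreover have "finite {x. x \<sqsubset> y \<and> \<not> large r (between x y)}"
    by (rule finite_if_monotone_not_large[where f = "\<lambda>x. between x y" and r = r])
      (auto simp: between_psubset_left dest: subsetD[OF relation_subset])
  ultimately show ?thesis
    unfolding conflicts_def by blast
qed

lemma separated_subset: "separated r Y \<Longrightarrow> Y \<subseteq> X"
  unfolding separated_def good_def by blast

lemma maximal_separated_exists:
  "\<exists>Y. separated r Y \<and> (\<forall>Z. separated r Z \<longrightarrow> Y \<subseteq> Z \<longrightarrow> Z = Y)"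
proof -
  have "separated r (\<Union>\<C>)" if "\<C> \<in> chains (Collect (separated r))" for \<C>
  proof -
    have sep: "\<And>Y. Y \<in> \<C> \<Longrightarrow> separated r Y" and chain: "chain\<^sub>\<subseteq> \<C>"
      using that unfolding chains_def by auto
    have "large r (between a b)" if "a \<in> \<Union>\<C>" "b \<in> \<Union>\<C>" "a \<sqsubset> b" for a b
    proof -
      obtain Y where "Y \<in> \<C>" "a \<in> Y" "b \<in> Y"
        using \<open>a \<in> \<Union>\<C>\<close> \<open>b \<in> \<Union>\<C>\<close> chain unfolding chain_subset_def by blast
      then show ?thesis
        using sep \<open>a \<sqsubset> b\<close> unfolding separated_def by blast
    qed
    moreover have "\<Union>\<C> \<subseteq> good r"
      using sep unfolding separated_def by blast
    ultimately show ?thesis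
      unfolding separated_def by blast
  qed
  then obtain Y where "separated r Y" "\<forall>Z\<in>Collect (separated r). Y \<subseteq> Z \<longrightarrow> Z = Y"
    using Zorn_Lemma[of "Collect (separated r)"] by blast
  then show ?thesis
    by blast
qed

lemma maximal_separated_covers:
  assumes sep: "separated r Y"
    and maximal: "\<And>Z. separated r Z \<Longrightarrow> Y \<subseteq> Z \<Longrightarrow> Z = Y"
  shows "X \<subseteq> (X - good r) \<union> Y \<union> (\<Union>y\<in>Y. conflicts r y)"
proof
  fix x
  assume "x \<in> X"
  show "x \<in> (X - good r) \<union> Y \<union> (\<Union>y\<in>Y. conflicts r y)"
  proof (rule ccontr)
    assume "x \<notin> (X - good r) \<union> Y \<union> (\<Union>y\<in>Y. conflicts r y)"
    then have "x \<in> good r" "x \<notin> Y" and no_conflict: "\<And>y. y \<in> Y \<Longrightarrow> x \<notin> conflicts r y"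
      using \<open>x \<in> X\<close> by auto
    have "separated r (insert x Y)"
      using sep \<open>x \<in> good r\<close> no_conflict unfolding separated_def conflicts_def by blast
    then show False
      using maximal \<open>x \<notin> Y\<close> by blast
  qed
qed

lemma maximal_separated_eqpoll:
  assumes "infinite X"
    and sep: "separated r Y"
    and maximal: "\<And>Z. separated r Z \<Longrightarrow> Y \<subseteq> Z \<Longrightarrow> Z = Y"
  shows "Y \<approx> X"
proof -
  have cover: "X \<subseteq> (X - good r) \<union> Y \<union> (\<Union>y\<in>Y. conflicts r y)"
    using maximal_separated_covers[OF sep maximal] .
  have "Y \<noteq> {}"
  proof
    assume "Y = {}"
    then have "X \<subseteq> X - good r"
      using cover by simp
    then show False
      using \<open>infinite X\<close> finite_not_good finite_subset by blast
  qed
  then have "X \<subseteq> (\<Union>y\<in>Y. (X - good r) \<union> {y} \<union> conflicts r y)"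
    using cover by blast
  then have "X \<lesssim> Y"
    using \<open>infinite X\<close> finite_not_good finite_conflicts by (intro lepoll_if_covered_by_finite) auto
  moreover have "Y \<subseteq> X"
    using separated_subset[OF sep] .
  ultimately show ?thesis
    by (simp add: lepoll_antisym subset_imp_lepoll)
qed

end

theorem fact3p2:
  fixes X :: "'a set" and R :: "'a rel" and r :: nat
  assumes "linear_order_on X R"
    and "infinite X"
    and "0 < r"
  shows "\<exists>Y \<subseteq> X. Y \<approx> X \<and>
           (\<forall>y1\<in>Y. \<forall>y2\<in>Y. (y1, y2) \<in> R - Id \<longrightarrow>
              (\<exists>A B C. A \<subseteq> X \<and> B \<subseteq> X \<and> C \<subseteq> X \<and>
                 finite A \<and> finite B \<and> finite C \<and>
                 card A = r \<and> card B = r \<and> card C = r \<and>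
                 (\<forall>a\<in>A. (a, y1) \<in> R - Id) \<and>
                 (\<forall>b\<in>B. (y1, b) \<in> R - Id \<and> (b, y2) \<in> R - Id) \<and>
                 (\<forall>c\<in>C. (y2, c) \<in> R - Id)))"
proof -
  interpret linearly_ordered_set X R
    using assms(1) by unfold_locales
  obtain Y where sep: "separated r Y" and maximal: "\<And>Z. separated r Z \<Longrightarrow> Y \<subseteq> Z \<Longrightarrow> Z = Y"
    using maximal_separated_exists by blast
  have "Y \<subseteq> X"
    using separated_subset[OF sep] .
  moreover have "Y \<approx> X"
    using maximal_separated_eqpoll[OF assms(2) sep maximal] .
  moreover have "\<exists>A B C. A \<subseteq> X \<and> B \<subseteq> X \<and> C \<subseteq> X \<and>
                 finite A \<and> finite B \<and> finite C \<and>
                 card A = r \<and> card B = r \<and> card C = r \<and>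
                 (\<forall>a\<in>A. a \<sqsubset> y1) \<and> (\<forall>b\<in>B. y1 \<sqsubset> b \<and> b \<sqsubset> y2) \<and> (\<forall>c\<in>C. y2 \<sqsubset> c)"
    if "y1 \<in> Y" "y2 \<in> Y" "y1 \<sqsubset> y2" for y1 y2
  proof -
    have "large r (lower y1)" "large r (between y1 y2)" "large r (upper y2)"
      using sep that unfolding separated_def good_def by blast+
    then obtain A B C where
      "A \<subseteq> lower y1" "finite A" "card A = r"
      "B \<subseteq> between y1 y2" "finite B" "card B = r"
      "C \<subseteq> upper y2" "finite C" "card C = r"
      unfolding large_def by blast
    moreover have "A \<subseteq> X" "B \<subseteq> X" "C \<subseteq> X"
      using calculation lower_subset between_subset upper_subset by blast+
    ultimately show ?thesis
      unfolding lower_def upper_def between_def by blast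
  qed
  ultimately show ?thesis
    by blast
qed

end
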